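(* For packed words $f,g$ of length $n$, write $f\leq g$ if (1) for all $i,j\in[n]$, ($i\geq j$ and $f(i)\leq f(j)$) implies $g(i)\leq g(j)$; and (2) for all $i,j\in[n]$, $g(i)=g(j)$ implies $f(i)=f(j)$. Then $\leq$ is a partial order on the set $PW(n)$ of packed words of length $n$. Moreover, for every $f\in PW(n)$, $$\phi(P_f)=\sum_{g\in PW(n),\ f\leq g} g,$$ i.e. the set of linear extensions of $P_f$ is $\{g\in PW(n)\mid f\leq g\}$.
   Context: A packed word of length $n$ is a word $w(1)\cdots w(n)$ of positive integers whose set of letters is $\{1,\dots,k\}$ for some $k$; equivalently a surjection $[n]\to[k]$. A weak plane poset is a finite set with two partial orders $\leq_1,\leq_2$ such that $x\leq_1 y$ and $x\leq_2 y$ imply $x=y$, and such that $x\preceq y\iff(x\leq_1 y$ or $x\leq_2 y)$ is a total quasi-order; write $x\equiv y$ if $x\preceq y$ and $y\preceq x$. For a packed word $w$ of length $n$, $P_w=([n],\leq_1,\leq_2)$ with $i\leq_1 j\iff(i\geq j$ and $w(i)\leq w(j))$ and $i\leq_2 j\iff(i\leq j$ and $w(i)\leq w(j))$. For a weak plane poset $P$ with underlying set $[n]$ such that the total order $x\ll y\iff(y\leq_1 x$ or $x\leq_2 y)$ is the natural order of $[n]$ (as is the case for $P_w$), a linear extension of $P$ is a surjection $f:[n]\to[k]$ (seen as the packed word $f(1)\cdots f(n)$) such that (a) $i\leq_1 j\Rightarrow f(i)\leq f(j)$ and (b) $f(i)=f(j)\Rightarrow i\equiv j$. Let $\mathbf{WQSym}$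 be the vector space with basis all packed words. The linear map $\phi$ from the span of isomorphism classes of weak plane posets to $\mathbf{WQSym}$ sends $P$ to the sum of its linear extensions. *)

theory Defs
  imports Main
begin

definition PW :: "nat \<Rightarrow> (nat \<Rightarrow> nat) set" where
  "PW n = {w. (\<exists>k. w ` {1..n} = {1..k}) \<and> (\<forall>i. i \<notin> {1..n} \<longrightarrow> w i = 0)}"

text \<open>The two partial orders of the weak plane poset P_w on [n].\<close>
definition le1 :: "(nat \<Rightarrow> nat) \<Rightarrow> nat \<Rightarrow> nat \<Rightarrow> bool" where
  "le1 w i j \<longleftrightarrow> i \<ge> j \<and> w i \<le> w j"

definition le2 :: "(nat \<Rightarrow> nat) \<Rightarrow> nat \<Rightarrow> nat \<Rightarrow> bool" where
  "le2 w i j \<longleftrightarrow> i \<le> j \<and> w i \<le> w j"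

definition preceq :: "(nat \<Rightarrow> nat) \<Rightarrow> nat \<Rightarrow> nat \<Rightarrow> bool" where
  "preceq w i j \<longleftrightarrow> le1 w i j \<or> le2 w i j"

definition equiv_P :: "(nat \<Rightarrow> nat) \<Rightarrow> nat \<Rightarrow> nat \<Rightarrow> bool" where
  "equiv_P w i j \<longleftrightarrow> preceq w i j \<and> preceq w j i"

definition lin_ext :: "nat \<Rightarrow> (nat \<Rightarrow> nat) \<Rightarrow> (nat \<Rightarrow> nat) set" where
  "lin_ext n w = {f \<in> PW n.
      (\<forall>i\<in>{1..n}. \<forall>j\<in>{1..n}. le1 w i j \<longrightarrow> f i \<le> f j) \<and>
      (\<forall>i\<in>{1..n}. \<forall>j\<in>{1..n}. f i = f j \<longrightarrow> equiv_P w i j)}"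

definition pw_le :: "nat \<Rightarrow> (nat \<Rightarrow> nat) \<Rightarrow> (nat \<Rightarrow> nat) \<Rightarrow> bool" where
  "pw_le n f g \<longleftrightarrow>
     (\<forall>i\<in>{1..n}. \<forall>j\<in>{1..n}. (i \<ge> j \<and> f i \<le> f j) \<longrightarrow> g i \<le> g j) \<and>
     (\<forall>i\<in>{1..n}. \<forall>j\<in>{1..n}. g i = g j \<longrightarrow> f i = f j)"

end

theory Submission
  imports Defs
begin

text \<open>For antisymmetry, f \<le> g \<le> f
forces f and g to have the same kernel, and then condition (1), applied in both directions and
for both orientations of a pair of positions, shows that f and g compare any two positions in the
same way. A packed word is determined by this comparison pattern, since f(i) is the number of
distinct letters not exceeding f(i). Finally, two positions are equivalent in P_f exactly when
they carry the same letter of f, so the defining conditions of a linear extension of P_f are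
literally those of f \<le> g.\<close>

lemma card_image_eq_if_same_kernel:
  assumes "\<And>i j. i \<in> S \<Longrightarrow> j \<in> S \<Longrightarrow> f i = f j \<longleftrightarrow> g i = g j"
  shows "card (f ` S) = card (g ` S)"
proof -
  define h where "h = (\<lambda>v. g (inv_into S f v))"
  have h_f: "h (f x) = g x" if "x \<in> S" for x
    using assms[of "inv_into S f (f x)" x] that
    by (simp add: h_def inv_into_into f_inv_into_f)
  have "inj_on h (f ` S)"
    by (rule inj_onI) (use assms h_f in force)
  moreover have "h ` f ` S = g ` S"
    using h_f by (auto simp: image_image)
  ultimately show ?thesis
    by (metis card_image)
qed

lemma PW_eq_card_image_le:
  assumes "f \<in> PW n" "i \<in> {1..n}"
  shows "f i = card (f ` {j \<in> {1..n}. f j \<le> f i})"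
proof -
  from assms(1) obtain k where k: "f ` {1..n} = {1..k}"
    unfolding PW_def by auto
  have "f ` {j \<in> {1..n}. f j \<le> f i} = {v \<in> f ` {1..n}. v \<le> f i}"
    by auto
  also have "\<dots> = {1..f i}"
  proof -
    have "f i \<le> k"
      using k assms(2) by (metis atLeastAtMost_iff imageI)
    then show ?thesis
      unfolding k by auto
  qed
  finally show ?thesis
    by simp
qed

lemma PW_eq_if_same_order:
  assumes "f \<in> PW n" "g \<in> PW n"
    and "\<And>a b. a \<in> {1..n} \<Longrightarrow> b \<in> {1..n} \<Longrightarrow> f a \<le> f b \<longleftrightarrow> g a \<le> g b"
  shows "f = g"
proof
  fix i
  show "f i = g i"
  proof (cases "i \<in> {1..n}")
    case False
    then show ?thesis
      using assms(1,2) unfolding PW_def by auto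
  next
    case True
    let ?S = "{j \<in> {1..n}. f j \<le> f i}"
    have same_kernel: "f a = f b \<longleftrightarrow> g a = g b" if "a \<in> {1..n}" "b \<in> {1..n}" for a b
      using assms(3)[OF that] assms(3)[OF that(2,1)] by (simp add: eq_iff)
    have "f i = card (f ` ?S)"
      using PW_eq_card_image_le[OF assms(1) True] .
    also have "\<dots> = card (g ` ?S)"
      by (rule card_image_eq_if_same_kernel) (simp add: same_kernel)
    also have "?S = {j \<in> {1..n}. g j \<le> g i}"
      using assms(3) True by blast
    also have "card (g ` \<dots>) = g i"
      using PW_eq_card_image_le[OF assms(2) True] by simp
    finally show ?thesis .
  qed
qed

lemma pw_le_refl: "pw_le n f f"
  unfolding pw_le_def by auto

lemma pw_le_trans: "pw_le n f g \<Longrightarrow> pw_le n g h \<Longrightarrow> pw_le n f h"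
  unfolding pw_le_def by blast

lemma pw_le_antisym_order:
  assumes "pw_le n f g" "pw_le n g f" "a \<in> {1..n}" "b \<in> {1..n}"
  shows "f a \<le> f b \<longleftrightarrow> g a \<le> g b"
proof -
  have ge: "f x \<le> f y \<longleftrightarrow> g x \<le> g y" if "x \<in> {1..n}" "y \<in> {1..n}" "y \<le> x" for x y
    using assms(1,2) that unfolding pw_le_def by blast
  have "f a = f b \<longleftrightarrow> g a = g b"
    using assms unfolding pw_le_def by blast
  then show ?thesis
    using ge[of a b] ge[of b a] assms(3,4) by linarith
qed

lemma pw_le_antisym:
  assumes "f \<in> PW n" "g \<in> PW n" "pw_le n f g" "pw_le n g f"
  shows "f = g"
  using assms(1,2) pw_le_antisym_order[OF assms(3,4)] by (rule PW_eq_if_same_order)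

lemma partial_order_on_pw_le:
  "partial_order_on (PW n) {(f, g). f \<in> PW n \<and> g \<in> PW n \<and> pw_le n f g}"
  unfolding partial_order_on_def preorder_on_def
  by (auto simp: refl_on_def pw_le_refl intro: transI pw_le_trans antisymI pw_le_antisym)

lemma equiv_P_iff: "equiv_P w i j \<longleftrightarrow> w i = w j"
  unfolding equiv_P_def preceq_def le1_def le2_def by auto

lemma lin_ext_eq_pw_le: "lin_ext n f = {g \<in> PW n. pw_le n f g}"
  unfolding lin_ext_def pw_le_def equiv_P_iff le1_def by auto

theorem mainTheorem4:
  shows "partial_order_on (PW n) {(f, g). f \<in> PW n \<and> g \<in> PW n \<and> pw_le n f g}
    \<and> (\<forall>f \<in> PW n. lin_ext n f = {g \<in> PW n. pw_le n f g})"
  using partial_order_on_pw_le lin_ext_eq_pw_le by blast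

end
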